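(* Let $I$ and $J$ be functions on $\mathcal{R}^\infty$ which are invariant with respect to both characteristic vector fields $X_1$ and $X_2$, such that $X_3(I)=I'$ and $X_3(J)=1$. Then $\omega=d_VI-I'\,d_VJ$ is an $X_1$ and $X_2$ invariant contact form.
   Context: $\mathcal{R}^\infty$ is the infinite prolongation of the involutive system $u_{ij}=f_{ij}(x^1,x^2,x^3,u,u_i,u_j)$, $1\le i<j\le3$ ($f_{ij}$ smooth, $D_kf_{ij}=D_if_{kj}$ for distinct $i,j,k$); the characteristic vector fields are the commuting total derivatives $X_i=D_i$, $\sigma_i=dx^i$. Forms on $\mathcal{R}^\infty$ are bigraded with $d=d_H+d_V$, $d_Hg=\sum_iX_i(g)\sigma_i$ for functions. A function $f$ is $X$-invariant if $X(f)=0$; a $(0,s)$ contact form $\omega$ is $X$-invariant if $X(\omega)=X\lrcorner d_H\omega=0$ ($X(\omega)$ the projected Lie derivative), and $X$ and $Y$ invariant if invariant with respect to both. *)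

theory Defs
  imports "HOL-Analysis.Analysis"
begin

text \<open>For the involutive
system u_ij = f_ij (i<j), the infinite prolongation R^infinity has the standard
coordinates x^1,x^2,x^3, u, and the pure derivatives u_{i^k} (k >= 1).
Here  P i k  denotes the coordinate u_{i^(k+1)}, e.g. P i 0 = u_i.\<close>

datatype ix = I1 | I2 | I3

fun ixn :: "ix \<Rightarrow> nat" where
  "ixn I1 = 1" | "ixn I2 = 2" | "ixn I3 = 3"

definition ix_lt :: "ix \<Rightarrow> ix \<Rightarrow> bool" where
  "ix_lt i j \<longleftrightarrow> ixn i < ixn j"

datatype coord = Xc ix | U | P ix nat

type_synonym point = "coord \<Rightarrow> real"
type_synonym func = "point \<Rightarrow> real"

fun vertical :: "coord \<Rightarrow> bool" where
  "vertical (Xc _) = False" | "vertical U = True" | "vertical (P _ _) = True"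

definition depends_only :: "func \<Rightarrow> coord set \<Rightarrow> bool" where
  "depends_only F S \<longleftrightarrow> (\<forall>p q. (\<forall>c\<in>S. p c = q c) \<longrightarrow> F p = F q)"

definition finitely_dependent :: "func \<Rightarrow> bool" where
  "finitely_dependent F \<longleftrightarrow> (\<exists>S. finite S \<and> depends_only F S)"

definition pd :: "coord \<Rightarrow> func \<Rightarrow> func" where
  "pd c F p = deriv (\<lambda>t. F (p(c := t))) (p c)"

definition pds :: "coord list \<Rightarrow> func \<Rightarrow> func" where
  "pds cs F = foldr pd cs F"

text \<open>A function on R^infinity: depends on finitely many coordinates and is
C^infinity in them (all iterated partial derivatives exist and are continuous;
continuity w.r.t. the product topology, which for finitely dependent functions
is ordinary joint continuity).\<close>
definition smooth :: "func \<Rightarrow> bool" where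
  "smooth F \<longleftrightarrow> finitely_dependent F \<and>
     (\<forall>cs. continuous_on UNIV (pds cs F) \<and>
        (\<forall>c p. (\<lambda>t. pds cs F (p(c := t))) differentiable (at (p c))))"

definition vf :: "(coord \<Rightarrow> func) \<Rightarrow> func \<Rightarrow> func" where
  "vf V F p = (\<Sum>c | pd c F p \<noteq> 0. V c p * pd c F p)"

definition fS :: "(ix \<Rightarrow> ix \<Rightarrow> real \<Rightarrow> real \<Rightarrow> real \<Rightarrow> real \<Rightarrow> real \<Rightarrow> real \<Rightarrow> real)
                 \<Rightarrow> ix \<Rightarrow> ix \<Rightarrow> func" where
  "fS f i j p = (if ix_lt i j
      then f i j (p (Xc I1)) (p (Xc I2)) (p (Xc I3)) (p U) (p (P i 0)) (p (P j 0))
      else f j i (p (Xc I1)) (p (Xc I2)) (p (Xc I3)) (p U) (p (P j 0)) (p (P i 0)))"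

text \<open>X i is the total derivative D_i on R^infinity:
D_i x^j = delta_ij, D_i u = u_i, D_i u_{i^k} = u_{i^(k+1)},
D_i u_{j^k} = u_{i j^k} = D_j^(k-1) f_ij for j ~= i.\<close>
definition total_derivs ::
  "(ix \<Rightarrow> ix \<Rightarrow> real \<Rightarrow> real \<Rightarrow> real \<Rightarrow> real \<Rightarrow> real \<Rightarrow> real \<Rightarrow> real)
   \<Rightarrow> (ix \<Rightarrow> coord \<Rightarrow> func) \<Rightarrow> bool" where
  "total_derivs f X \<longleftrightarrow> (\<forall>i p.
     (\<forall>j. X i (Xc j) p = (if j = i then 1 else 0)) \<and>
     X i U p = p (P i 0) \<and>
     (\<forall>k. X i (P i k) p = p (P i (Suc k))) \<and>
     (\<forall>j k. j \<noteq> i \<longrightarrow> X i (P j k) p = ((vf (X j)) ^^ k) (fS f i j) p))"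

definition invariant_fun :: "(ix \<Rightarrow> coord \<Rightarrow> func) \<Rightarrow> ix \<Rightarrow> func \<Rightarrow> bool" where
  "invariant_fun X i F \<longleftrightarrow> (\<forall>p. vf (X i) F p = 0)"

text \<open>A (0,1)-form  sum_c a_c theta_c  (theta_c = d_V c the contact form of
the vertical coordinate c) is represented by its coefficient function a.\<close>
type_synonym form01 = "coord \<Rightarrow> func"

definition contact01 :: "form01 \<Rightarrow> bool" where
  "contact01 \<omega> \<longleftrightarrow> (\<forall>j. \<omega> (Xc j) = (\<lambda>p. 0)) \<and> finite {c. \<omega> c \<noteq> (\<lambda>p. 0)} \<and>
      (\<forall>c. smooth (\<omega> c))"

definition dV :: "func \<Rightarrow> form01" where
  "dV F c = (if vertical c then pd c F else (\<lambda>p. 0))"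

definition form_diff :: "form01 \<Rightarrow> form01 \<Rightarrow> form01" where
  "form_diff \<alpha> \<beta> c p = \<alpha> c p - \<beta> c p"

definition form_smult :: "func \<Rightarrow> form01 \<Rightarrow> form01" where
  "form_smult g \<alpha> c p = g p * \<alpha> c p"

text \<open>A (1,1)-form is written  sum_i sigma_i /\ eta_i  and represented by
i |-> eta_i.  d_H of a (0,1)-form: using d_H a = sum_i X_i(a) sigma_i and
d_H theta_c = - d_V d_H c = sum_i sigma_i /\ d_V(X_i(c)), we get
eta_i = sum_c (X_i(a_c) theta_c + a_c d_V(X_i(c))).\<close>
definition dH01 :: "(ix \<Rightarrow> coord \<Rightarrow> func) \<Rightarrow> form01 \<Rightarrow> (ix \<Rightarrow> form01)" where
  "dH01 X \<omega> i c' p = vf (X i) (\<omega> c') p +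
       (\<Sum>c | \<omega> c \<noteq> (\<lambda>q. 0). \<omega> c p * dV (X i c) c' p)"

text \<open>Interior product with X_j of a (1,1)-form sum_i sigma_i /\ eta_i:
since sigma_i(X_j) = delta_ij and contact forms annihilate X_j, it is eta_j.\<close>
definition interior11 :: "ix \<Rightarrow> (ix \<Rightarrow> form01) \<Rightarrow> form01" where
  "interior11 j \<beta> = \<beta> j"

text \<open>X_j(omega) = X_j interior d_H omega; omega is X_j-invariant iff this vanishes.\<close>
definition invariant_form :: "(ix \<Rightarrow> coord \<Rightarrow> func) \<Rightarrow> ix \<Rightarrow> form01 \<Rightarrow> bool" where
  "invariant_form X j \<omega> \<longleftrightarrow> (\<forall>c p. interior11 j (dH01 X \<omega>) c p = 0)"

end

(*
  The total derivatives D_i commute: on coordinates this reduces, by induction on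
  the order of the jet, to the compatibility condition D_k f_ij = D_i f_kj, and for general
  smooth functions the second-order parts cancel by Schwarz's theorem.  Hence, for j = 1, 2,
  D_j I' = D_3 D_j I = 0, i.e. I' is X_j-invariant.  Differentiating D_j K = 0 along a vertical
  coordinate shows that d_V K is an X_j-invariant contact form whenever K is an X_j-invariant
  function, and X_j-invariant contact forms are closed under differences and under
  multiplication by X_j-invariant functions.
*)
theory Submission
  imports Defs
begin

section \<open>Smooth functions\<close>

lemma mixed_partials_commute:
  fixes g gs gt gst gts :: "real \<Rightarrow> real \<Rightarrow> real"
  assumes ds: "\<And>s t. ((\<lambda>s. g s t) has_real_derivative gs s t) (at s)"
    and dt: "\<And>s t. ((\<lambda>t. g s t) has_real_derivative gt s t) (at t)"
    and dst: "\<And>s t. ((\<lambda>t. gs s t) has_real_derivative gst s t) (at t)"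
    and dts: "\<And>s t. ((\<lambda>s. gt s t) has_real_derivative gts s t) (at s)"
    and cst: "continuous_on UNIV (\<lambda>z. gst (fst z) (snd z))"
    and cts: "continuous_on UNIV (\<lambda>z. gts (fst z) (snd z))"
  shows "gst a b = gts a b"
proof (rule ccontr)
  assume ne: "gst a b \<noteq> gts a b"
  define e where "e = \<bar>gst a b - gts a b\<bar> / 2"
  have e: "e > 0" using ne by (simp add: e_def)
  have "continuous (at (a,b)) (\<lambda>z. gst (fst z) (snd z))"
    using cst by (simp add: continuous_on_eq_continuous_at)
  then obtain d1 where d1: "d1 > 0" "\<And>z. dist z (a,b) < d1 \<Longrightarrow> dist (gst (fst z) (snd z)) (gst a b) < e"
    using e unfolding continuous_at_eps_delta by force
  have "continuous (at (a,b)) (\<lambda>z. gts (fst z) (snd z))"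
    using cts by (simp add: continuous_on_eq_continuous_at)
  then obtain d2 where d2: "d2 > 0" "\<And>z. dist z (a,b) < d2 \<Longrightarrow> dist (gts (fst z) (snd z)) (gts a b) < e"
    using e unfolding continuous_at_eps_delta by force
  define h where "h = min d1 d2 / 2"
  have h: "h > 0" using d1 d2 by (auto simp: h_def)
  have close: "dist (x,y) (a,b) < min d1 d2" if "a < x" "x < a + h" "b < y" "y < b + h" for x y
  proof -
    have "dist (x,y) (a,b) \<le> dist x a + dist y b"
      using sqrt_sum_squares_le_sum_abs[of "dist x a" "dist y b"] by (simp add: dist_Pair_Pair)
    also have "\<dots> < h + h" using that by (simp add: dist_real_def)
    finally show ?thesis by (simp add: h_def)
  qed
  text \<open>The second difference of \<open>g\<close> over the square of side \<open>h\<close> at \<open>(a, b)\<close>, evaluated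
    by the mean value theorem in either order, equals \<open>h\<^sup>2 gst x1 y1\<close> and \<open>h\<^sup>2 gts x2 y2\<close>.\<close>
  obtain x1 where x1: "a < x1" "x1 < a + h"
    "(g (a+h) (b+h) - g (a+h) b) - (g a (b+h) - g a b) = ((a+h) - a) * (gs x1 (b+h) - gs x1 b)"
    using MVT2[of a "a+h" "\<lambda>s. g s (b+h) - g s b" "\<lambda>s. gs s (b+h) - gs s b"] h
      DERIV_diff[OF ds ds] by auto
  obtain y1 where y1: "b < y1" "y1 < b + h" "gs x1 (b+h) - gs x1 b = ((b+h) - b) * gst x1 y1"
    using MVT2[of b "b+h" "\<lambda>t. gs x1 t" "\<lambda>t. gst x1 t"] h dst by auto
  obtain y2 where y2: "b < y2" "y2 < b + h"
    "(g (a+h) (b+h) - g a (b+h)) - (g (a+h) b - g a b) = ((b+h) - b) * (gt (a+h) y2 - gt a y2)"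
    using MVT2[of b "b+h" "\<lambda>t. g (a+h) t - g a t" "\<lambda>t. gt (a+h) t - gt a t"] h
      DERIV_diff[OF dt dt] by auto
  obtain x2 where x2: "a < x2" "x2 < a + h" "gt (a+h) y2 - gt a y2 = ((a+h) - a) * gts x2 y2"
    using MVT2[of a "a+h" "\<lambda>s. gt s y2" "\<lambda>s. gts s y2"] h dts by auto
  have "h * h * gst x1 y1 = h * h * gts x2 y2"
    using x1(3) y1(3) y2(3) x2(3) by (simp add: algebra_simps)
  then have eq: "gst x1 y1 = gts x2 y2" using h by simp
  have "\<bar>gst x1 y1 - gst a b\<bar> < e" using d1(2)[of "(x1,y1)"] close[of x1 y1] x1 y1 by (simp add: dist_real_def)
  moreover have "\<bar>gts x2 y2 - gts a b\<bar> < e" using d2(2)[of "(x2,y2)"] close[of x2 y2] x2 y2 by (simp add: dist_real_def)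
  moreover have "\<bar>gst a b - gts a b\<bar> \<le> \<bar>gst x1 y1 - gst a b\<bar> + \<bar>gts x2 y2 - gts a b\<bar>"
    using eq abs_triangle_ineq4[of "gst a b - gst x1 y1" "gts a b - gts x2 y2"] by (simp add: abs_minus_commute)
  ultimately show False by (simp add: e_def)
qed

definition partially_differentiable :: "func \<Rightarrow> bool" where
  "partially_differentiable F \<longleftrightarrow> (\<forall>c p. (\<lambda>t. F (p(c := t))) differentiable (at (p c)))"

lemma partially_differentiableI:
  assumes "\<And>c p. \<exists>D. ((\<lambda>s. F (p(c:=s))) has_real_derivative D) (at (p c))"
  shows "partially_differentiable F"
  unfolding partially_differentiable_def using assms real_differentiable_def by blast

lemma has_real_derivative_pd_upd:
  assumes "partially_differentiable F"
  shows "((\<lambda>s. F (p(c:=s))) has_real_derivative pd c F (p(c:=t))) (at t)"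
proof -
  have "(\<lambda>s. F ((p(c:=t))(c:=s))) differentiable (at ((p(c:=t)) c))"
    using assms unfolding partially_differentiable_def by blast
  then have "DERIV (\<lambda>s. F (p(c:=s))) t :> deriv (\<lambda>s. F (p(c:=s))) t"
    using DERIV_deriv_iff_real_differentiable by simp
  then show ?thesis by (simp add: pd_def)
qed

lemma has_real_derivative_pd:
  "partially_differentiable F \<Longrightarrow> ((\<lambda>s. F (p(c:=s))) has_real_derivative pd c F p) (at (p c))"
  using has_real_derivative_pd_upd[of F p c "p c"] by simp

lemma pd_eqI:
  assumes "((\<lambda>s. F (p(c:=s))) has_real_derivative D) (at (p c))"
  shows "pd c F p = D"
  unfolding pd_def using DERIV_imp_deriv[OF assms] .

lemma pd_const [simp]: "pd c (\<lambda>p. a) = (\<lambda>p. 0)"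
  by (simp add: pd_def fun_eq_iff)

lemma pd_proj: "pd d (\<lambda>p. p c) p = (if d = c then 1 else 0)"
  by (rule pd_eqI) (auto intro: DERIV_ident DERIV_const)

lemma pd_mult:
  assumes "partially_differentiable F" "partially_differentiable G"
  shows "pd c (\<lambda>p. F p * G p) p = pd c F p * G p + F p * pd c G p"
proof -
  have "((\<lambda>s. F (p(c:=s)) * G (p(c:=s))) has_real_derivative pd c F p * G p + pd c G p * F p) (at (p c))"
    using DERIV_mult[OF has_real_derivative_pd[OF assms(1), of p c] has_real_derivative_pd[OF assms(2), of p c]] by simp
  from pd_eqI[OF this] show ?thesis by simp
qed

lemma pd_diff:
  assumes "partially_differentiable F" "partially_differentiable G"
  shows "pd c (\<lambda>p. F p - G p) p = pd c F p - pd c G p"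
proof -
  have "((\<lambda>s. F (p(c:=s)) - G (p(c:=s))) has_real_derivative pd c F p - pd c G p) (at (p c))"
    using DERIV_diff[OF has_real_derivative_pd[OF assms(1), of p c] has_real_derivative_pd[OF assms(2), of p c]] by simp
  from pd_eqI[OF this] show ?thesis by simp
qed

lemma pds_Nil [simp]: "pds [] F = F" by (simp add: pds_def)
lemma pds_Cons [simp]: "pds (c # cs) F = pd c (pds cs F)" by (simp add: pds_def)
lemma pds_snoc: "pds (cs @ [c]) F = pds cs (pd c F)" by (simp add: pds_def)

lemma depends_only_mono: "depends_only F S \<Longrightarrow> S \<subseteq> T \<Longrightarrow> depends_only F T"
  unfolding depends_only_def by blast

lemma depends_only_const: "depends_only (\<lambda>p. a) S"
  by (simp add: depends_only_def)

lemma depends_only_mult: "depends_only F S \<Longrightarrow> depends_only G S \<Longrightarrow> depends_only (\<lambda>p. F p * G p) S"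
  unfolding depends_only_def by metis

lemma depends_only_diff: "depends_only F S \<Longrightarrow> depends_only G S \<Longrightarrow> depends_only (\<lambda>p. F p - G p) S"
  unfolding depends_only_def by metis

lemma pd_eq_0_outside:
  assumes "depends_only F S" "c \<notin> S"
  shows "pd c F p = 0"
proof -
  have "(\<lambda>t. F (p(c:=t))) = (\<lambda>t. F p)"
    using assms unfolding depends_only_def by (intro ext) (metis fun_upd_other)
  then show ?thesis unfolding pd_def by simp
qed

lemma depends_only_pd:
  assumes "depends_only F S"
  shows "depends_only (pd c F) S"
proof (cases "c \<in> S")
  case True
  show ?thesis unfolding depends_only_def
  proof (intro allI impI)
    fix p q :: point assume pq: "\<forall>x\<in>S. p x = q x"
    have "(\<lambda>t. F (p(c:=t))) = (\<lambda>t. F (q(c:=t)))"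
      using assms pq unfolding depends_only_def by (intro ext) simp
    moreover have "p c = q c" using pq True by auto
    ultimately show "pd c F p = pd c F q" unfolding pd_def by simp
  qed
next
  case False
  then show ?thesis using pd_eq_0_outside[OF assms] unfolding depends_only_def by simp
qed

lemma smoothD:
  assumes "smooth F"
  shows "finitely_dependent F" "continuous_on UNIV F" "partially_differentiable F" "\<And>c. smooth (pd c F)"
proof -
  show "finitely_dependent F" using assms smooth_def by blast
  show "continuous_on UNIV F" using assms unfolding smooth_def by (metis pds_Nil)
  show "partially_differentiable F"
    using assms unfolding smooth_def partially_differentiable_def by (metis pds_Nil)
  have "finitely_dependent (pd c F)" for c
    using assms depends_only_pd unfolding smooth_def finitely_dependent_def by blast
  then show "\<And>c. smooth (pd c F)" using assms unfolding smooth_def by (metis pds_snoc)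
qed

lemma smooth_obtain_support:
  assumes "smooth F"
  obtains S where "finite S" "depends_only F S"
  using smoothD(1)[OF assms] unfolding finitely_dependent_def by blast

lemma smooth_coinduct:
  assumes M: "\<And>H. H \<in> M \<Longrightarrow>
      finitely_dependent H \<and> continuous_on UNIV H \<and> partially_differentiable H \<and> (\<forall>c. pd c H \<in> M)"
    and F: "F \<in> M"
  shows "smooth F"
proof -
  have "\<forall>G\<in>M. pds cs G \<in> M" for cs
    by (induction cs) (auto dest: M)
  then show ?thesis using F M unfolding smooth_def partially_differentiable_def by blast
qed

lemma smooth_const: "smooth (\<lambda>p. a)"
proof (rule smooth_coinduct[where M = "range (\<lambda>a. \<lambda>p. a)"])
  fix H :: func assume "H \<in> range (\<lambda>a. \<lambda>p. a)"
  then obtain b where H: "H = (\<lambda>p. b)" by auto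
  have "finitely_dependent H" unfolding H finitely_dependent_def depends_only_def by blast
  moreover have "partially_differentiable H" unfolding H partially_differentiable_def by simp
  ultimately show "finitely_dependent H \<and> continuous_on UNIV H \<and> partially_differentiable H \<and>
      (\<forall>c. pd c H \<in> range (\<lambda>a. \<lambda>p. a))"
    unfolding H by auto
qed auto

lemma smooth_proj: "smooth (\<lambda>p. p c)"
proof (rule smooth_coinduct[where M = "insert (\<lambda>p. p c) (range (\<lambda>a. \<lambda>p. a))"])
  fix H :: func assume "H \<in> insert (\<lambda>p. p c) (range (\<lambda>a. \<lambda>p. a))"
  then consider "H = (\<lambda>p. p c)" | "smooth H" "H \<in> range (\<lambda>a. \<lambda>p. a)"
    using smooth_const by auto
  then show "finitely_dependent H \<and> continuous_on UNIV H \<and> partially_differentiable H \<and>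
      (\<forall>d. pd d H \<in> insert (\<lambda>p. p c) (range (\<lambda>a. \<lambda>p. a)))"
  proof cases
    case 1
    have "pd d H = (\<lambda>p. if d = c then 1 else 0)" for d
      using pd_proj unfolding 1 by blast
    moreover have "finitely_dependent H"
      unfolding 1 finitely_dependent_def depends_only_def by (intro exI[of _ "{c}"]) simp
    moreover have "partially_differentiable H"
    proof (rule partially_differentiableI)
      fix d p
      show "\<exists>D. ((\<lambda>s. H (p(d:=s))) has_real_derivative D) (at (p d))"
        by (cases "c = d") (auto simp: 1 intro: DERIV_ident DERIV_const)
    qed
    ultimately show ?thesis by (auto simp: 1)
  next
    case 2
    then show ?thesis using smoothD by auto
  qed
qed auto

lemma sum_lessThan_add_split: "(\<Sum>i<n + m. f i) = (\<Sum>i<n. f i) + (\<Sum>i<m. f (n + i))"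
  for f :: "nat \<Rightarrow> 'a::comm_monoid_add"
  by (induction m) (simp_all add: add.assoc)

lemma finitely_dependent_sum_products:
  fixes n :: nat
  assumes "\<forall>i<n. smooth (A i) \<and> smooth (B i)"
  shows "finitely_dependent (\<lambda>p. \<Sum>i<n. A i p * B i p)"
proof -
  have "\<forall>i<n. \<exists>S. finite S \<and> depends_only (A i) S \<and> depends_only (B i) S"
  proof (intro allI impI)
    fix i assume "i < n"
    then obtain SA SB where "finite SA" "depends_only (A i) SA" "finite SB" "depends_only (B i) SB"
      using assms smooth_obtain_support by metis
    then show "\<exists>S. finite S \<and> depends_only (A i) S \<and> depends_only (B i) S"
      by (intro exI[of _ "SA \<union> SB"]) (auto intro: depends_only_mono)
  qed
  then obtain S where S: "\<forall>i<n. finite (S i) \<and> depends_only (A i) (S i) \<and> depends_only (B i) (S i)"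
    by metis
  have "depends_only (\<lambda>p. \<Sum>i<n. A i p * B i p) (\<Union>i<n. S i)"
    unfolding depends_only_def
  proof (intro allI impI)
    fix p q :: point assume pq: "\<forall>c\<in>\<Union>i<n. S i. p c = q c"
    have "A i p = A i q \<and> B i p = B i q" if "i < n" for i
      using S that pq unfolding depends_only_def by (meson UN_I lessThan_iff)
    then show "(\<Sum>i<n. A i p * B i p) = (\<Sum>i<n. A i q * B i q)" by (intro sum.cong) auto
  qed
  then show ?thesis using S unfolding finitely_dependent_def by blast
qed

lemma has_real_derivative_sum_products:
  fixes n :: nat
  assumes "\<forall>i<n. partially_differentiable (A i) \<and> partially_differentiable (B i)"
  shows "((\<lambda>s. \<Sum>i<n. A i (p(c:=s)) * B i (p(c:=s))) has_real_derivative
      (\<Sum>i<n. pd c (A i) p * B i p + pd c (B i) p * A i p)) (at (p c))"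
proof (rule DERIV_sum)
  fix i assume "i \<in> {..<n}"
  then have "partially_differentiable (A i)" "partially_differentiable (B i)" using assms by auto
  from DERIV_mult[OF has_real_derivative_pd[OF this(1), of p c] has_real_derivative_pd[OF this(2), of p c]]
  show "((\<lambda>s. A i (p(c:=s)) * B i (p(c:=s))) has_real_derivative
      pd c (A i) p * B i p + pd c (B i) p * A i p) (at (p c))"
    by simp
qed

text \<open>Sums of products of smooth functions form a class closed under \<open>pd\<close> (by the product rule),
  which is what makes the coinduction go through.\<close>
lemma smooth_sum_products:
  fixes n :: nat and A B :: "nat \<Rightarrow> func"
  assumes "\<forall>i<n. smooth (A i) \<and> smooth (B i)"
  shows "smooth (\<lambda>p. \<Sum>i<n. A i p * B i p)"
proof -
  define M :: "func set" where
    "M = {H. \<exists>(n::nat) A B. (\<forall>i<n. smooth (A i) \<and> smooth (B i)) \<and> H = (\<lambda>p. \<Sum>i<n. A i p * B i p)}"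
  have "smooth H" if "H \<in> M" for H
  proof (rule smooth_coinduct[of M])
    fix H assume "H \<in> M"
    then obtain n :: nat and A B :: "nat \<Rightarrow> func"
      where sm: "\<forall>i<n. smooth (A i) \<and> smooth (B i)" and H: "H = (\<lambda>p. \<Sum>i<n. A i p * B i p)"
      unfolding M_def by blast
    have pdiff: "\<forall>i<n. partially_differentiable (A i) \<and> partially_differentiable (B i)"
      using sm smoothD(3) by blast
    have der: "((\<lambda>s. H (p(c:=s))) has_real_derivative
        (\<Sum>i<n. pd c (A i) p * B i p + pd c (B i) p * A i p)) (at (p c))" for c p
      unfolding H by (rule has_real_derivative_sum_products[OF pdiff])
    have "pd c H \<in> M" for c
    proof -
      define A' where "A' i = (if i < n then pd c (A i) else pd c (B (i - n)))" for i
      define B' where "B' i = (if i < n then B i else A (i - n))" for i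
      have "\<forall>i<n + n. smooth (A' i) \<and> smooth (B' i)"
        using sm smoothD(4) by (auto simp: A'_def B'_def)
      moreover have "pd c H p = (\<Sum>i<n + n. A' i p * B' i p)" for p
      proof -
        have "pd c H p = (\<Sum>i<n. pd c (A i) p * B i p + pd c (B i) p * A i p)"
          using pd_eqI[OF der] .
        also have "\<dots> = (\<Sum>i<n + n. A' i p * B' i p)"
          by (simp add: sum_lessThan_add_split sum.distrib A'_def B'_def)
        finally show ?thesis .
      qed
      ultimately show ?thesis unfolding M_def by blast
    qed
    moreover have "partially_differentiable H" using der by (intro partially_differentiableI) blast
    moreover have "continuous_on UNIV H" unfolding H
      using sm smoothD(2) by (intro continuous_on_sum continuous_on_mult) auto
    ultimately show "finitely_dependent H \<and> continuous_on UNIV H \<and> partially_differentiable H \<and>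
        (\<forall>c. pd c H \<in> M)"
      using finitely_dependent_sum_products[OF sm] H by blast
  qed (rule that)
  then show ?thesis using assms unfolding M_def by blast
qed

lemma smooth_mult: "smooth F \<Longrightarrow> smooth G \<Longrightarrow> smooth (\<lambda>p. F p * G p)"
  using smooth_sum_products[of 1 "\<lambda>_. F" "\<lambda>_. G"] by simp

lemma smooth_add: "smooth F \<Longrightarrow> smooth G \<Longrightarrow> smooth (\<lambda>p. F p + G p)"
  using smooth_sum_products[of 2 "\<lambda>i. if i = 0 then F else G" "\<lambda>_ _. 1"] smooth_const
  by (auto simp: numeral_2_eq_2 lessThan_Suc add.commute less_Suc_eq)

lemma smooth_diff: "smooth F \<Longrightarrow> smooth G \<Longrightarrow> smooth (\<lambda>p. F p - G p)"
  using smooth_add[of F "\<lambda>p. G p * (-1)"] smooth_mult[of G "\<lambda>_. -1"] smooth_const by simp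

lemma smooth_sum: "finite S \<Longrightarrow> (\<And>c. c \<in> S \<Longrightarrow> smooth (F c)) \<Longrightarrow> smooth (\<lambda>p. \<Sum>c\<in>S. F c p)"
  by (induction S rule: finite_induct) (simp_all add: smooth_const smooth_add)

lemma continuous_on_fun_upd2: "continuous_on UNIV (\<lambda>z::real \<times> real. p(c := fst z, d := snd z))"
proof (rule continuous_on_coordinatewise_then_product)
  fix i
  show "continuous_on UNIV (\<lambda>z::real \<times> real. (p(c := fst z, d := snd z)) i)"
    by (cases "i = d"; cases "i = c") (auto intro!: continuous_intros)
qed

lemma pd_commute:
  assumes "smooth F"
  shows "pd c (pd d F) p = pd d (pd c F) p"
proof (cases "c = d")
  case False
  have tw: "p(c:=s, d:=t) = p(d:=t, c:=s)" for s t using False by (simp add: fun_upd_twist)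
  have sm: "smooth (pd c F)" "smooth (pd d F)" using assms smoothD(4) by auto
  have pdiff: "partially_differentiable F" "partially_differentiable (pd c F)"
    "partially_differentiable (pd d F)"
    using assms sm smoothD(3) by auto
  have cont: "continuous_on UNIV (\<lambda>z::real \<times> real. G (p(c := fst z, d := snd z)))" if "smooth G" for G
    using continuous_on_compose2[OF smoothD(2)[OF that] continuous_on_fun_upd2] by simp
  have "pd d (pd c F) (p(c := p c, d := p d)) = pd c (pd d F) (p(c := p c, d := p d))"
  proof (rule mixed_partials_commute[where g = "\<lambda>s t. F (p(c:=s, d:=t))"
        and gs = "\<lambda>s t. pd c F (p(c:=s, d:=t))" and gt = "\<lambda>s t. pd d F (p(c:=s, d:=t))"
        and gst = "\<lambda>s t. pd d (pd c F) (p(c:=s, d:=t))" and gts = "\<lambda>s t. pd c (pd d F) (p(c:=s, d:=t))"])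
    fix s t
    show "((\<lambda>s. F (p(c:=s, d:=t))) has_real_derivative pd c F (p(c:=s, d:=t))) (at s)"
      using has_real_derivative_pd_upd[OF pdiff(1), of "p(d:=t)" c s] by (simp add: tw)
    show "((\<lambda>t. F (p(c:=s, d:=t))) has_real_derivative pd d F (p(c:=s, d:=t))) (at t)"
      using has_real_derivative_pd_upd[OF pdiff(1), of "p(c:=s)" d t] by simp
    show "((\<lambda>t. pd c F (p(c:=s, d:=t))) has_real_derivative pd d (pd c F) (p(c:=s, d:=t))) (at t)"
      using has_real_derivative_pd_upd[OF pdiff(2), of "p(c:=s)" d t] by simp
    show "((\<lambda>s. pd d F (p(c:=s, d:=t))) has_real_derivative pd c (pd d F) (p(c:=s, d:=t))) (at s)"
      using has_real_derivative_pd_upd[OF pdiff(3), of "p(d:=t)" c s] by (simp add: tw)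
  qed (use cont smoothD(4) sm in auto)
  then show ?thesis by simp
qed simp

section \<open>Vector fields\<close>

lemma vf_eq_sum:
  assumes "finite S" "depends_only G S"
  shows "vf V G p = (\<Sum>c\<in>S. V c p * pd c G p)"
proof -
  have "{c. pd c G p \<noteq> 0} \<subseteq> S" using pd_eq_0_outside[OF assms(2)] by blast
  then show ?thesis unfolding vf_def
    by (rule sum.mono_neutral_left[OF assms(1)]) auto
qed

lemma vf_const: "vf V (\<lambda>p. a) p = 0"
  using vf_eq_sum[of "{}" "\<lambda>p. a" V p] by (simp add: depends_only_const)

lemma vf_proj: "vf V (\<lambda>p. p c) p = V c p"
  using vf_eq_sum[of "{c}" "\<lambda>p. p c" V p] by (simp add: depends_only_def pd_proj)

lemma vf_mult:
  assumes F: "smooth F" and G: "smooth G"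
  shows "vf V (\<lambda>p. F p * G p) p = vf V F p * G p + F p * vf V G p"
proof -
  obtain S1 where S1: "finite S1" "depends_only F S1" using F by (rule smooth_obtain_support)
  obtain S2 where S2: "finite S2" "depends_only G S2" using G by (rule smooth_obtain_support)
  let ?S = "S1 \<union> S2"
  have S: "finite ?S" "depends_only F ?S" "depends_only G ?S"
    using S1 S2 depends_only_mono by auto
  have "vf V (\<lambda>p. F p * G p) p = (\<Sum>c\<in>?S. V c p * pd c (\<lambda>p. F p * G p) p)"
    using vf_eq_sum S depends_only_mult by blast
  also have "\<dots> = (\<Sum>c\<in>?S. V c p * pd c F p) * G p + F p * (\<Sum>c\<in>?S. V c p * pd c G p)"
    using pd_mult[OF smoothD(3)[OF F] smoothD(3)[OF G]]
    by (simp add: sum_distrib_left sum_distrib_right sum.distrib algebra_simps)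
  also have "\<dots> = vf V F p * G p + F p * vf V G p"
    using vf_eq_sum[OF S(1,2)] vf_eq_sum[OF S(1,3)] by simp
  finally show ?thesis .
qed

lemma vf_diff:
  assumes F: "smooth F" and G: "smooth G"
  shows "vf V (\<lambda>p. F p - G p) p = vf V F p - vf V G p"
proof -
  obtain S1 where S1: "finite S1" "depends_only F S1" using F by (rule smooth_obtain_support)
  obtain S2 where S2: "finite S2" "depends_only G S2" using G by (rule smooth_obtain_support)
  let ?S = "S1 \<union> S2"
  have S: "finite ?S" "depends_only F ?S" "depends_only G ?S"
    using S1 S2 depends_only_mono by auto
  have "vf V (\<lambda>p. F p - G p) p = (\<Sum>c\<in>?S. V c p * pd c (\<lambda>p. F p - G p) p)"
    using vf_eq_sum S depends_only_diff by blast
  also have "\<dots> = (\<Sum>c\<in>?S. V c p * pd c F p) - (\<Sum>c\<in>?S. V c p * pd c G p)"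
    by (simp add: pd_diff[OF smoothD(3)[OF F] smoothD(3)[OF G]] sum_subtractf right_diff_distrib)
  also have "\<dots> = vf V F p - vf V G p"
    using vf_eq_sum[OF S(1,2)] vf_eq_sum[OF S(1,3)] by simp
  finally show ?thesis .
qed

lemma smooth_vf:
  assumes "finite S" "depends_only G S" "smooth G" "\<And>c. c \<in> S \<Longrightarrow> smooth (V c)"
  shows "smooth (vf V G)"
proof -
  have "vf V G = (\<lambda>p. \<Sum>c\<in>S. V c p * pd c G p)"
    using vf_eq_sum[OF assms(1,2)] by blast
  then show ?thesis using assms by (simp add: smooth_sum smooth_mult smoothD(4))
qed

lemma depends_only_vf:
  assumes "finite S" "depends_only G S" "\<And>c. c \<in> S \<Longrightarrow> depends_only (V c) T" "S \<subseteq> T"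
  shows "depends_only (vf V G) T"
  unfolding depends_only_def vf_eq_sum[OF assms(1,2)]
proof (intro allI impI)
  fix p q :: point assume pq: "\<forall>c\<in>T. p c = q c"
  have "V c p = V c q" "pd c G p = pd c G q" if "c \<in> S" for c
    using assms(3)[OF that] depends_only_pd[OF assms(2), of c] pq assms(4) that
    unfolding depends_only_def by blast+
  then show "(\<Sum>c\<in>S. V c p * pd c G p) = (\<Sum>c\<in>S. V c q * pd c G q)" by (intro sum.cong) auto
qed

lemma pd_vf:
  assumes "finite S" "depends_only G S" "smooth G" "\<And>d. d \<in> S \<Longrightarrow> partially_differentiable (W d)"
  shows "pd e (vf W G) p = (\<Sum>d\<in>S. pd e (W d) p * pd d G p + W d p * pd e (pd d G) p)"
proof -
  have "((\<lambda>s. \<Sum>d\<in>S. W d (p(e:=s)) * pd d G (p(e:=s))) has_real_derivative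
     (\<Sum>d\<in>S. pd e (W d) p * pd d G p + pd e (pd d G) p * W d p)) (at (p e))"
  proof (rule DERIV_sum)
    fix d assume "d \<in> S"
    then have "partially_differentiable (W d)" "partially_differentiable (pd d G)"
      using assms(4) smoothD(3)[OF smoothD(4)[OF assms(3)]] by auto
    from DERIV_mult[OF has_real_derivative_pd[OF this(1), of p e] has_real_derivative_pd[OF this(2), of p e]]
    show "((\<lambda>s. W d (p(e:=s)) * pd d G (p(e:=s))) has_real_derivative
        pd e (W d) p * pd d G p + pd e (pd d G) p * W d p) (at (p e))"
      by simp
  qed
  moreover have "vf W G = (\<lambda>p. \<Sum>d\<in>S. W d p * pd d G p)"
    using vf_eq_sum[OF assms(1,2)] by blast
  ultimately show ?thesis
    using pd_eqI by (simp add: algebra_simps)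
qed

lemma pd_vf_commutator:
  assumes "finite S" "depends_only G S" "smooth G" "\<And>d. d \<in> S \<Longrightarrow> partially_differentiable (W d)"
  shows "pd e (vf W G) p = vf W (pd e G) p + (\<Sum>d\<in>S. pd d G p * pd e (W d) p)"
proof -
  have "pd e (vf W G) p = (\<Sum>d\<in>S. pd d G p * pd e (W d) p) + (\<Sum>d\<in>S. W d p * pd d (pd e G) p)"
    using pd_vf[OF assms] pd_commute[OF assms(3)] by (simp add: sum.distrib mult.commute)
  also have "(\<Sum>d\<in>S. W d p * pd d (pd e G) p) = vf W (pd e G) p"
    using vf_eq_sum[OF assms(1) depends_only_pd[OF assms(2)]] by simp
  finally show ?thesis by simp
qed

lemma vf_vf:
  assumes S: "finite S" and T: "finite T" and G: "smooth G" "depends_only G S"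
    and W: "\<And>d. d \<in> S \<Longrightarrow> smooth (W d) \<and> depends_only (W d) T"
  shows "vf V (vf W G) p = (\<Sum>d\<in>S. vf V (W d) p * pd d G p) +
           (\<Sum>c\<in>S. \<Sum>d\<in>S. V c p * W d p * pd c (pd d G) p)"
proof -
  let ?R = "S \<union> T"
  have R: "finite ?R" using S T by simp
  have depR: "depends_only (vf W G) ?R"
    using depends_only_vf[OF S G(2), of W ?R] W depends_only_mono by blast
  have WR: "depends_only (W d) ?R" if "d \<in> S" for d using W[OF that] depends_only_mono by blast
  have "vf V (vf W G) p = (\<Sum>c\<in>?R. V c p * pd c (vf W G) p)" using vf_eq_sum[OF R depR] .
  also have "\<dots> = (\<Sum>c\<in>?R. V c p * (\<Sum>d\<in>S. pd c (W d) p * pd d G p + W d p * pd c (pd d G) p))"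
    using pd_vf[OF S G(2) G(1)] W smoothD(3) by simp
  also have "\<dots> = (\<Sum>c\<in>?R. \<Sum>d\<in>S. V c p * pd c (W d) p * pd d G p) +
      (\<Sum>c\<in>?R. \<Sum>d\<in>S. V c p * W d p * pd c (pd d G) p)"
    by (simp add: sum_distrib_left sum.distrib algebra_simps)
  also have "(\<Sum>c\<in>?R. \<Sum>d\<in>S. V c p * pd c (W d) p * pd d G p) = (\<Sum>d\<in>S. vf V (W d) p * pd d G p)"
    by (subst sum.swap) (simp add: vf_eq_sum[OF R WR] sum_distrib_right)
  also have "(\<Sum>c\<in>?R. \<Sum>d\<in>S. V c p * W d p * pd c (pd d G) p) =
      (\<Sum>c\<in>S. \<Sum>d\<in>S. V c p * W d p * pd c (pd d G) p)"
    by (rule sum.mono_neutral_right[OF R])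
      (auto simp: pd_eq_0_outside[OF depends_only_pd[OF G(2)]])
  finally show ?thesis .
qed

text \<open>The bracket of two vector fields has no second-order part, so \<open>V\<close> and \<open>W\<close> commute on \<open>G\<close>
  as soon as they commute on the coordinates \<open>G\<close> depends on.\<close>
lemma vf_commute:
  assumes S: "finite S" and T: "finite T" and G: "smooth G" "depends_only G S"
    and V: "\<And>d. d \<in> S \<Longrightarrow> smooth (V d) \<and> depends_only (V d) T"
    and W: "\<And>d. d \<in> S \<Longrightarrow> smooth (W d) \<and> depends_only (W d) T"
    and VW: "\<And>d. d \<in> S \<Longrightarrow> vf V (W d) p = vf W (V d) p"
  shows "vf V (vf W G) p = vf W (vf V G) p"
proof -
  have "(\<Sum>c\<in>S. \<Sum>d\<in>S. V c p * W d p * pd c (pd d G) p) =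
        (\<Sum>d\<in>S. \<Sum>c\<in>S. V c p * W d p * pd c (pd d G) p)" by (rule sum.swap)
  also have "\<dots> = (\<Sum>c\<in>S. \<Sum>d\<in>S. W c p * V d p * pd c (pd d G) p)"
    using pd_commute[OF G(1)] by (simp add: mult.commute)
  finally show ?thesis
    using vf_vf[OF S T G W, where V = V and p = p] vf_vf[OF S T G V, where V = W and p = p] VW by (simp cong: sum.cong)
qed

section \<open>Total derivatives\<close>

fun coord_order :: "coord \<Rightarrow> nat" where
  "coord_order (Xc _) = 0" | "coord_order U = 0" | "coord_order (P _ k) = Suc k"

definition coords_upto :: "nat \<Rightarrow> coord set" where
  "coords_upto n = {c. coord_order c \<le> n}"

lemma finite_coords_upto: "finite (coords_upto n)"
proof (rule finite_subset)
  show "coords_upto n \<subseteq> range Xc \<union> {U} \<union> (\<lambda>(i, k). P i k) ` (UNIV \<times> {..<n})"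
  proof
    fix c assume "c \<in> coords_upto n"
    then show "c \<in> range Xc \<union> {U} \<union> (\<lambda>(i, k). P i k) ` (UNIV \<times> {..<n})"
      by (cases c) (auto simp: coords_upto_def image_iff)
  qed
  have UNIV_ix: "(UNIV :: ix set) = {I1, I2, I3}" using ix.exhaust by auto
  show "finite (range Xc \<union> {U} \<union> (\<lambda>(i, k). P i k) ` (UNIV \<times> {..<n}))"
    by (simp add: UNIV_ix)
qed

lemma coords_upto_mono: "m \<le> n \<Longrightarrow> coords_upto m \<subseteq> coords_upto n"
  by (auto simp: coords_upto_def)

lemma finite_subset_coords_upto:
  assumes "finite S"
  obtains n where "S \<subseteq> coords_upto n"
  using assms by (auto simp: coords_upto_def intro: member_le_sum that[of "\<Sum>c\<in>S. coord_order c"])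

locale total_derivatives =
  fixes f :: "ix \<Rightarrow> ix \<Rightarrow> real \<Rightarrow> real \<Rightarrow> real \<Rightarrow> real \<Rightarrow> real \<Rightarrow> real \<Rightarrow> real"
    and X :: "ix \<Rightarrow> coord \<Rightarrow> func"
  assumes f_smooth: "\<forall>i j. ix_lt i j \<longrightarrow> smooth (fS f i j)"
    and total: "total_derivs f X"
    and compat: "\<forall>i j k. i \<noteq> j \<and> j \<noteq> k \<and> i \<noteq> k \<longrightarrow>
                   (\<forall>p. vf (X k) (fS f i j) p = vf (X i) (fS f k j) p)"
begin

lemma X_Xc: "X i (Xc j) = (\<lambda>p. if j = i then 1 else 0)"
  using total unfolding total_derivs_def by auto

lemma X_U: "X i U = (\<lambda>p. p (P i 0))"
  using total unfolding total_derivs_def by auto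

lemma X_P_same: "X i (P i k) = (\<lambda>p. p (P i (Suc k)))"
  using total unfolding total_derivs_def by auto

lemma X_P_other: "j \<noteq> i \<Longrightarrow> X i (P j k) = (vf (X j) ^^ k) (fS f i j)"
  using total unfolding total_derivs_def by auto

lemma fS_commute: "i \<noteq> j \<Longrightarrow> fS f i j = fS f j i"
  by (cases i; cases j) (auto simp: fS_def ix_lt_def fun_eq_iff)

lemma smooth_fS: "i \<noteq> j \<Longrightarrow> smooth (fS f i j)"
proof -
  assume "i \<noteq> j"
  then have "ix_lt i j \<or> ix_lt j i" by (cases i; cases j) (auto simp: ix_lt_def)
  then show ?thesis using f_smooth fS_commute[OF \<open>i \<noteq> j\<close>] by metis
qed

lemma fS_depends_only: "depends_only (fS f i j) (coords_upto 1)"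
  by (auto simp: depends_only_def coords_upto_def fS_def)

lemma X_regular_if_iterated_fS_regular:
  assumes iter: "\<And>m a j. m < n \<Longrightarrow> j \<noteq> a \<Longrightarrow>
      smooth ((vf (X j) ^^ m) (fS f a j)) \<and> depends_only ((vf (X j) ^^ m) (fS f a j)) (coords_upto (Suc m))"
    and c: "coord_order c \<le> n"
  shows "smooth (X a c) \<and> depends_only (X a c) (coords_upto (Suc n))"
proof (cases c)
  case (Xc j)
  then show ?thesis by (simp add: X_Xc smooth_const depends_only_const)
next
  case U
  then show ?thesis by (auto simp: X_U smooth_proj depends_only_def coords_upto_def)
next
  case (P l k)
  show ?thesis
  proof (cases "l = a")
    case True
    then show ?thesis using c P by (auto simp: X_P_same smooth_proj depends_only_def coords_upto_def)
  next
    case False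
    have "k < n" using c P by simp
    moreover have "coords_upto (Suc k) \<subseteq> coords_upto (Suc n)" using \<open>k < n\<close> by (simp add: coords_upto_mono)
    ultimately show ?thesis using iter[where m = k and a = a and j = l] P False by (auto simp: X_P_other intro: depends_only_mono)
  qed
qed

text \<open>The coefficients of the \<open>X i\<close> and the iterated derivatives of the \<open>f\<^sub>i\<^sub>j\<close> are regular by a
  simultaneous induction on the order.\<close>
lemma iterated_fS_regular:
  "j \<noteq> a \<Longrightarrow> smooth ((vf (X j) ^^ m) (fS f a j)) \<and>
     depends_only ((vf (X j) ^^ m) (fS f a j)) (coords_upto (Suc m))"
proof (induction m arbitrary: a j rule: less_induct)
  case (less m)
  show ?case
  proof (cases m)
    case 0
    then show ?thesis using smooth_fS fS_depends_only less.prems by auto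
  next
    case (Suc k)
    let ?G = "(vf (X j) ^^ k) (fS f a j)"
    have G: "smooth ?G" "depends_only ?G (coords_upto m)" using less Suc by auto
    have Xc: "smooth (X j c) \<and> depends_only (X j c) (coords_upto (Suc m))" if "c \<in> coords_upto m" for c
      using X_regular_if_iterated_fS_regular[of m c j] less that by (auto simp: coords_upto_def)
    have "smooth (vf (X j) ?G)" using smooth_vf[OF finite_coords_upto G(2,1)] Xc by blast
    moreover have "depends_only (vf (X j) ?G) (coords_upto (Suc m))"
      using depends_only_vf[OF finite_coords_upto G(2)] Xc coords_upto_mono[of m "Suc m"] by auto
    ultimately show ?thesis using Suc by simp
  qed
qed

lemma smooth_X: "smooth (X a c)"
  using X_regular_if_iterated_fS_regular[of "coord_order c" c a] iterated_fS_regular by blast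

lemma X_depends_only: "depends_only (X a c) (coords_upto (Suc (coord_order c)))"
  using X_regular_if_iterated_fS_regular[of "coord_order c" c a] iterated_fS_regular by blast

lemma X_depends_only_upto: "c \<in> coords_upto n \<Longrightarrow> depends_only (X a c) (coords_upto (Suc n))"
  using X_depends_only[of a c] coords_upto_mono[of "Suc (coord_order c)" "Suc n"]
  by (auto simp: coords_upto_def intro: depends_only_mono)

lemma smooth_vf_X: "smooth G \<Longrightarrow> smooth (vf (X a) G)"
  by (metis smooth_obtain_support smooth_vf smooth_X)

lemma vf_X_commute_on:
  assumes "smooth G" "depends_only G (coords_upto n)"
    and "\<And>c p. coord_order c \<le> n \<Longrightarrow> vf (X a) (X b c) p = vf (X b) (X a c) p"
  shows "vf (X a) (vf (X b) G) p = vf (X b) (vf (X a) G) p"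
  using assms smooth_X X_depends_only_upto
  by (intro vf_commute[OF finite_coords_upto finite_coords_upto]) (auto simp: coords_upto_def)

lemma X_commute_on_P_diag:
  assumes "a \<noteq> b"
  shows "vf (X a) (X b (P a n)) p = vf (X b) (X a (P a n)) p"
proof -
  have "vf (X a) (X b (P a n)) p = (vf (X a) ^^ Suc n) (fS f b a) p"
    using assms by (simp add: X_P_other)
  also have "\<dots> = X b (P a (Suc n)) p" using assms by (simp add: X_P_other del: funpow.simps)
  also have "\<dots> = vf (X b) (X a (P a n)) p" by (simp add: X_P_same vf_proj)
  finally show ?thesis .
qed

text \<open>This is where the compatibility condition \<open>D\<^sub>k f\<^sub>i\<^sub>j = D\<^sub>i f\<^sub>k\<^sub>j\<close> enters.\<close>
lemma iterated_fS_compat: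
  assumes IH: "\<And>a b c p. coord_order c \<le> n \<Longrightarrow> vf (X a) (X b c) p = vf (X b) (X a c) p"
    and distinct: "a \<noteq> b" "a \<noteq> l" "b \<noteq> l"
    and "m \<le> n"
  shows "vf (X a) ((vf (X l) ^^ m) (fS f b l)) p = vf (X b) ((vf (X l) ^^ m) (fS f a l)) p"
  using \<open>m \<le> n\<close>
proof (induction m arbitrary: p)
  case 0
  then show ?case using compat distinct by simp
next
  case (Suc m)
  let ?Hb = "(vf (X l) ^^ m) (fS f b l)" and ?Ha = "(vf (X l) ^^ m) (fS f a l)"
  have Hb: "smooth ?Hb" "depends_only ?Hb (coords_upto (Suc m))"
    and Ha: "smooth ?Ha" "depends_only ?Ha (coords_upto (Suc m))"
    using iterated_fS_regular distinct by auto
  have eq: "vf (X a) ?Hb = vf (X b) ?Ha"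
    using Suc by auto
  have "vf (X a) (vf (X l) ?Hb) p = vf (X l) (vf (X a) ?Hb) p"
    using vf_X_commute_on[OF Hb] IH Suc.prems by auto
  also have "\<dots> = vf (X l) (vf (X b) ?Ha) p"
    by (simp add: eq)
  also have "\<dots> = vf (X b) (vf (X l) ?Ha) p"
    using vf_X_commute_on[OF Ha] IH Suc.prems by auto
  finally show ?case by simp
qed

lemma X_commute_on_coords:
  "coord_order c \<le> n \<Longrightarrow> vf (X a) (X b c) p = vf (X b) (X a c) p"
proof (induction n arbitrary: a b c p)
  case 0
  then consider j where "c = Xc j" | "c = U" by (cases c) auto
  then show ?case
  proof cases
    case 2
    then show ?thesis by (cases "a = b") (simp_all add: X_U vf_proj X_P_other fS_commute)
  qed (simp add: X_Xc vf_const)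
next
  case (Suc n)
  show ?case
  proof (cases "coord_order c \<le> n")
    case True
    then show ?thesis using Suc.IH by blast
  next
    case False
    then obtain l where c: "c = P l n" using Suc.prems by (cases c) auto
    consider "a = b" | "a \<noteq> b" "l = a" | "a \<noteq> b" "l = b" | "a \<noteq> b" "l \<noteq> a" "l \<noteq> b" by blast
    then show ?thesis
    proof cases
      case 4
      then show ?thesis using iterated_fS_compat[OF Suc.IH, where a = a and b = b and l = l and m = n] c by (simp add: X_P_other)
    qed (use c X_commute_on_P_diag in auto)
  qed
qed

theorem total_derivatives_commute:
  assumes "smooth G"
  shows "vf (X a) (vf (X b) G) p = vf (X b) (vf (X a) G) p"
proof -
  obtain S where "finite S" "depends_only G S" using assms by (rule smooth_obtain_support)
  moreover obtain n where "S \<subseteq> coords_upto n" using \<open>finite S\<close> by (rule finite_subset_coords_upto)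
  ultimately show ?thesis
    using vf_X_commute_on[OF assms] X_commute_on_coords depends_only_mono by blast
qed

end

section \<open>Invariant contact forms\<close>

lemma form_diff_eq: "form_diff \<alpha> \<beta> c = (\<lambda>p. \<alpha> c p - \<beta> c p)"
  by (simp add: form_diff_def fun_eq_iff)

lemma form_smult_eq: "form_smult g \<alpha> c = (\<lambda>p. g p * \<alpha> c p)"
  by (simp add: form_smult_def fun_eq_iff)

lemma contact01D:
  assumes "contact01 \<omega>"
  shows "finite {c. \<omega> c \<noteq> (\<lambda>p. 0)}" "smooth (\<omega> c)"
  using assms unfolding contact01_def by auto

lemma contact01_dV:
  assumes "smooth K"
  shows "contact01 (dV K)"
proof -
  obtain S where S: "finite S" "depends_only K S" using assms by (rule smooth_obtain_support)
  have "{c. dV K c \<noteq> (\<lambda>p. 0)} \<subseteq> S"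
    using pd_eq_0_outside[OF S(2)] by (auto simp: dV_def)
  then have "finite {c. dV K c \<noteq> (\<lambda>p. 0)}" using S(1) by (rule finite_subset)
  moreover have "smooth (dV K c)" for c
    by (cases "vertical c") (simp_all add: dV_def smoothD(4)[OF assms] smooth_const)
  moreover have "dV K (Xc j) = (\<lambda>p. 0)" for j by (simp add: dV_def)
  ultimately show ?thesis unfolding contact01_def by blast
qed

lemma contact01_diff:
  assumes "contact01 \<alpha>" "contact01 \<beta>"
  shows "contact01 (form_diff \<alpha> \<beta>)"
proof -
  have "{c. form_diff \<alpha> \<beta> c \<noteq> (\<lambda>p. 0)} \<subseteq> {c. \<alpha> c \<noteq> (\<lambda>p. 0)} \<union> {c. \<beta> c \<noteq> (\<lambda>p. 0)}"
    by (auto simp: form_diff_eq)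
  then show ?thesis
    using assms by (auto simp: contact01_def form_diff_eq smooth_diff intro: finite_subset)
qed

lemma contact01_smult:
  assumes "smooth g" "contact01 \<alpha>"
  shows "contact01 (form_smult g \<alpha>)"
proof -
  have "{c. form_smult g \<alpha> c \<noteq> (\<lambda>p. 0)} \<subseteq> {c. \<alpha> c \<noteq> (\<lambda>p. 0)}"
    by (auto simp: form_smult_eq)
  then show ?thesis
    using assms by (auto simp: contact01_def form_smult_eq smooth_mult intro: finite_subset)
qed

lemma dH01_eq_sum:
  assumes "finite S" "{c. \<omega> c \<noteq> (\<lambda>p. 0)} \<subseteq> S"
  shows "dH01 X \<omega> i c' p = vf (X i) (\<omega> c') p + (\<Sum>c\<in>S. \<omega> c p * dV (X i c) c' p)"
proof -
  have "(\<Sum>c | \<omega> c \<noteq> (\<lambda>q. 0). \<omega> c p * dV (X i c) c' p) = (\<Sum>c\<in>S. \<omega> c p * dV (X i c) c' p)"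
    by (rule sum.mono_neutral_left[OF assms]) auto
  then show ?thesis by (simp add: dH01_def)
qed

lemma dH01_diff:
  assumes "contact01 \<alpha>" "contact01 \<beta>"
  shows "dH01 X (form_diff \<alpha> \<beta>) i c' p = dH01 X \<alpha> i c' p - dH01 X \<beta> i c' p"
proof -
  let ?S = "{c. \<alpha> c \<noteq> (\<lambda>p. 0)} \<union> {c. \<beta> c \<noteq> (\<lambda>p. 0)}"
  have S: "finite ?S" using assms contact01D(1) by blast
  have "{c. form_diff \<alpha> \<beta> c \<noteq> (\<lambda>p. 0)} \<subseteq> ?S" by (auto simp: form_diff_eq)
  then show ?thesis
    using dH01_eq_sum[OF S, of \<alpha>] dH01_eq_sum[OF S, of \<beta>] dH01_eq_sum[OF S, of "form_diff \<alpha> \<beta>"]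
      vf_diff[OF contact01D(2)[OF assms(1)] contact01D(2)[OF assms(2)]]
    by (auto simp: form_diff_eq sum_subtractf left_diff_distrib)
qed

lemma dH01_smult:
  assumes "smooth g" "contact01 \<alpha>"
  shows "dH01 X (form_smult g \<alpha>) i c' p = vf (X i) g p * \<alpha> c' p + g p * dH01 X \<alpha> i c' p"
proof -
  let ?S = "{c. \<alpha> c \<noteq> (\<lambda>p. 0)}"
  have S: "finite ?S" using assms contact01D(1) by blast
  have "{c. form_smult g \<alpha> c \<noteq> (\<lambda>p. 0)} \<subseteq> ?S" by (auto simp: form_smult_eq)
  then show ?thesis
    using dH01_eq_sum[OF S, of \<alpha>] dH01_eq_sum[OF S, of "form_smult g \<alpha>"]
      vf_mult[OF assms(1) contact01D(2)[OF assms(2)]]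
    by (auto simp: form_smult_eq sum_distrib_left algebra_simps)
qed

lemma invariant_form_diff:
  assumes "contact01 \<alpha>" "contact01 \<beta>" "invariant_form X j \<alpha>" "invariant_form X j \<beta>"
  shows "invariant_form X j (form_diff \<alpha> \<beta>)"
  using assms by (simp add: invariant_form_def interior11_def dH01_diff)

lemma invariant_form_smult:
  assumes "smooth g" "invariant_fun X j g" "contact01 \<alpha>" "invariant_form X j \<alpha>"
  shows "invariant_form X j (form_smult g \<alpha>)"
  using assms by (simp add: invariant_form_def invariant_fun_def interior11_def dH01_smult)

context total_derivatives
begin

text \<open>Differentiating \<open>X\<^sub>j K = 0\<close> along a vertical coordinate gives exactly the vanishing of
  \<open>X\<^sub>j \<lrcorner> d\<^sub>H d\<^sub>V K\<close>.\<close>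
lemma invariant_form_dV:
  assumes K: "smooth K" "invariant_fun X j K"
  shows "invariant_form X j (dV K)"
  unfolding invariant_form_def interior11_def
proof (intro allI)
  fix c' p
  obtain S where S: "finite S" "depends_only K S" using K(1) by (rule smooth_obtain_support)
  have supp: "{c. dV K c \<noteq> (\<lambda>p. 0)} \<subseteq> S"
    using pd_eq_0_outside[OF S(2)] by (auto simp: dV_def)
  show "dH01 X (dV K) j c' p = 0"
  proof (cases "vertical c'")
    case False
    then show ?thesis by (simp add: dH01_def dV_def vf_const)
  next
    case True
    have terms: "dV K c p * dV (X j c) c' p = pd c K p * pd c' (X j c) p" for c
      using True by (cases c) (auto simp: dV_def X_Xc)
    have dV_c': "dV K c' = pd c' K" using True by (simp add: dV_def)
    have "dH01 X (dV K) j c' p = vf (X j) (dV K c') p + (\<Sum>c\<in>S. dV K c p * dV (X j c) c' p)"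
      by (rule dH01_eq_sum[OF S(1) supp])
    also have "\<dots> = vf (X j) (pd c' K) p + (\<Sum>c\<in>S. pd c K p * pd c' (X j c) p)"
      by (simp only: terms dV_c')
    also have "\<dots> = pd c' (vf (X j) K) p"
      using pd_vf_commutator[OF S K(1)] smooth_X smoothD(3) by simp
    also have "\<dots> = 0"
      using K(2) by (simp add: invariant_fun_def pd_def)
    finally show ?thesis .
  qed
qed

end

theorem lemma4p11:
  fixes f :: "ix \<Rightarrow> ix \<Rightarrow> real \<Rightarrow> real \<Rightarrow> real \<Rightarrow> real \<Rightarrow> real \<Rightarrow> real \<Rightarrow> real"
    and X :: "ix \<Rightarrow> coord \<Rightarrow> func"
    and I J I' :: func
  assumes f_smooth: "\<forall>i j. ix_lt i j \<longrightarrow> smooth (fS f i j)"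
    and total: "total_derivs f X"
    and compat: "\<forall>i j k. i \<noteq> j \<and> j \<noteq> k \<and> i \<noteq> k \<longrightarrow>
                   (\<forall>p. vf (X k) (fS f i j) p = vf (X i) (fS f k j) p)"
    and I_smooth: "smooth I" and J_smooth: "smooth J"
    and I_inv1: "invariant_fun X I1 I" and I_inv2: "invariant_fun X I2 I"
    and J_inv1: "invariant_fun X I1 J" and J_inv2: "invariant_fun X I2 J"
    and I3: "\<forall>p. vf (X I3) I p = I' p"
    and J3: "\<forall>p. vf (X I3) J p = 1"
  shows "contact01 (form_diff (dV I) (form_smult I' (dV J))) \<and>
         invariant_form X I1 (form_diff (dV I) (form_smult I' (dV J))) \<and>
         invariant_form X I2 (form_diff (dV I) (form_smult I' (dV J)))"
proof -
  interpret total_derivatives f X using f_smooth total compat by unfold_locales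
  have I'_eq: "I' = vf (X I3) I" using I3 by auto
  have I'_smooth: "smooth I'" unfolding I'_eq using I_smooth by (rule smooth_vf_X)
  have I'_inv: "invariant_fun X j I'" if "invariant_fun X j I" for j
  proof -
    have "vf (X j) I = (\<lambda>p. 0)" using that by (auto simp: invariant_fun_def)
    then show ?thesis
      using total_derivatives_commute[OF I_smooth, of j I3] by (simp add: invariant_fun_def I'_eq vf_const)
  qed
  have contact: "contact01 (form_diff (dV I) (form_smult I' (dV J)))"
    using contact01_diff contact01_smult contact01_dV I_smooth J_smooth I'_smooth by blast
  have inv: "invariant_form X j (form_diff (dV I) (form_smult I' (dV J)))"
    if "invariant_fun X j I" "invariant_fun X j J" for j
    using invariant_form_diff[OF contact01_dV[OF I_smooth] contact01_smult[OF I'_smooth contact01_dV[OF J_smooth]]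
        invariant_form_dV[OF I_smooth] invariant_form_smult[OF I'_smooth I'_inv contact01_dV[OF J_smooth]
          invariant_form_dV[OF J_smooth]]] that
    by blast
  show ?thesis using contact inv I_inv1 I_inv2 J_inv1 J_inv2 by blast
qed

end
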